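(* Let $T=\mathrm{diag}(t_1,t_2,t_3)$ with $|t_1|=|t_2|=s>0$ and $s_3:=|t_3|>0$, and put $u=s_3/s$. Then the condition $2\pi N_T|\det T|=1$ holds if and only if \[ s_3=\begin{cases}\left[1+\dfrac{\arctan\big(\sqrt{u^{-2}-1}\big)}{u^2\sqrt{u^{-2}-1}}\right]^{-1}, & u<1,\\[2ex] \tfrac12, & u=1,\\[1ex] \left[1-\dfrac{\sqrt{1-u^{-2}}}{2(u^2-1)}\ln\dfrac{\big|1-\sqrt{1-u^{-2}}\big|}{1+\sqrt{1-u^{-2}}}\right]^{-1}, & u>1.\end{cases} \]
   Context: $N_T$ is defined by $N_T^{-1}=\int_{S^2}(\boldsymbol n^\intercal T^{-2}\boldsymbol n)^{-2}\,\mathrm{d}^2\boldsymbol n$, where $S^2$ is the unit sphere in $\mathbb{R}^3$ with its standard surface measure. *)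

theory Defs
  imports "HOL-Analysis.Analysis"
begin

text \<open>Integral over the unit sphere S^2 with respect to its standard surface measure,
  written via the standard spherical-coordinate parametrisation
  n(theta,phi) = (sin theta cos phi, sin theta sin phi, cos theta), with area element
  sin theta dtheta dphi, theta in [0,pi], phi in [0,2 pi].\<close>
definition sphere_pt :: "real \<Rightarrow> real \<Rightarrow> real^3" where
  "sphere_pt \<theta> \<phi> = vector [sin \<theta> * cos \<phi>, sin \<theta> * sin \<phi>, cos \<theta>]"

definition sphere_integral :: "(real^3 \<Rightarrow> real) \<Rightarrow> real" where
  "sphere_integral f =
     (LINT p : {0..pi} \<times> {0..2*pi} | lborel. f (sphere_pt (fst p) (snd p)) * sin (fst p))"

definition N_T :: "real^3^3 \<Rightarrow> real" where
  "N_T T = inverse (sphere_integral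
              (\<lambda>n. inverse ((n \<bullet> (matrix_inv (T ** T) *v n)) ^ 2)))"

definition diag3 :: "real \<Rightarrow> real \<Rightarrow> real \<Rightarrow> real^3^3" where
  "diag3 a b c = (\<chi> i j. if i = j then (vector [a, b, c] :: real^3) $ i else 0)"

end

theory Submission
  imports Defs
begin

text \<open>For T = diag(t1, t2, t3) with |t1| = |t2| = s the quadratic form n^T T^-2 n on the
  unit sphere depends only on the polar angle: it equals (1 + k cos^2 \<theta>) / s^2 with
  k = s^2 / t3^2 - 1 > -1. Integrating out the azimuth and substituting x = cos \<theta> gives
  1 / N_T = 2 \<pi> s^4 \<integral>[-1,1] (1 + k x^2)^-2 dx, and by an elementary antiderivative this
  integral is 1 / (1 + k) + A(k), where A(k) is arctan (sqrt k) / sqrt k, 1 or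
  artanh (sqrt (-k)) / sqrt (-k) according to the sign of k. These three cases are the cases
  u < 1, u = 1 and u > 1 of the closed form.\<close>

lemma matrix_inv_unique:
  fixes A B :: "'a::semiring_1^'n^'n"
  assumes "A ** B = mat 1" and "B ** A = mat 1"
  shows "matrix_inv A = B"
  unfolding matrix_inv_def
proof (rule some_equality)
  fix C assume "A ** C = mat 1 \<and> C ** A = mat 1"
  then have "C = C ** (A ** B)" and "(C ** A) ** B = B"
    using assms(1) by simp_all
  then show "C = B"
    by (simp add: matrix_mul_assoc)
qed (use assms in simp)

lemma diag3_mult: "diag3 a b c ** diag3 a' b' c' = diag3 (a * a') (b * b') (c * c')"
  unfolding diag3_def matrix_matrix_mult_def by (simp add: vec_eq_iff forall_3 sum_3)

lemma diag3_1: "diag3 1 1 1 = mat 1"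
  unfolding diag3_def mat_def by (simp add: vec_eq_iff forall_3)

lemma det_diag3: "det (diag3 a b c) = a * b * c"
  unfolding det_3 diag3_def by simp

lemma matrix_inv_diag3:
  assumes "a \<noteq> 0" and "b \<noteq> 0" and "c \<noteq> 0"
  shows "matrix_inv (diag3 a b c) = diag3 (inverse a) (inverse b) (inverse c)"
  by (rule matrix_inv_unique) (simp_all add: diag3_mult assms diag3_1)

lemma inner_diag3_mult_vec:
  "x \<bullet> (diag3 a b c *v x) = a * (x$1)^2 + b * (x$2)^2 + c * (x$3)^2"
  unfolding diag3_def matrix_vector_mult_def inner_vec_def
  by (simp add: sum_3 power2_eq_square)

lemma sphere_pt_inner_diag3_axisymmetric:
  "sphere_pt \<theta> \<phi> \<bullet> (diag3 a a c *v sphere_pt \<theta> \<phi>) = a + (c - a) * (cos \<theta>)^2"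
proof -
  have "(sin \<theta> * cos \<phi>)^2 + (sin \<theta> * sin \<phi>)^2 = (sin \<theta>)^2 * ((sin \<phi>)^2 + (cos \<phi>)^2)"
    by (simp only: power_mult_distrib distrib_left add.commute)
  also have "\<dots> = 1 - (cos \<theta>)^2"
    by (simp add: sin_squared_eq)
  finally have "a * (sin \<theta> * cos \<phi>)^2 + a * (sin \<theta> * sin \<phi>)^2 = a * (1 - (cos \<theta>)^2)"
    by (metis distrib_left)
  then show ?thesis
    unfolding inner_diag3_mult_vec sphere_pt_def by (simp add: algebra_simps)
qed

lemma has_integral_sin_mult_cos:
  assumes "continuous_on {-1..1} h"
  shows "((\<lambda>t. sin t * h (cos t)) has_integral integral {-1..1} h) {0..pi}"
proof -
  have "((\<lambda>t. (- sin t) *\<^sub>R h (cos t)) has_integral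
          (integral {cos 0..cos pi} h - integral {cos pi..cos 0} h)) {0..pi}"
  proof (rule has_integral_substitution_general[where s="{}" and c="-1" and d=1])
    show "(cos has_real_derivative - sin t) (at t within {0..pi})" for t
      by (rule has_field_derivative_at_within[OF DERIV_cos])
    show "continuous_on {0..pi} cos"
      by (rule continuous_on_cos[OF continuous_on_id])
  qed (auto simp: assms)
  then have "((\<lambda>t. - (sin t * h (cos t))) has_integral - integral {-1..1} h) {0..pi}"
    by simp
  then show ?thesis
    by (simp add: has_integral_neg_iff)
qed

lemma sphere_integral_zonal:
  assumes "continuous_on {-1..1} h" and "\<And>\<theta> \<phi>. f (sphere_pt \<theta> \<phi>) = h (cos \<theta>)"
  shows "sphere_integral f = 2 * pi * integral {-1..1} h"
proof -
  let ?g = "\<lambda>p::real \<times> real. sin (fst p) * h (cos (fst p))"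
  have box: "{0..pi} \<times> {0..2*pi} = cbox (0, 0) (pi, 2*pi)"
    by (simp add: cbox_Pair_eq)
  have cont: "continuous_on (cbox (0, 0) (pi, 2*pi)) ?g"
    by (intro continuous_intros continuous_on_compose2[OF assms(1)])
       (auto simp: cbox_Pair_eq)
  have "sphere_integral f = (LINT p : cbox (0, 0) (pi, 2*pi) | lborel. ?g p)"
    unfolding sphere_integral_def assms(2) box by (simp add: mult.commute)
  also have "\<dots> = integral (cbox (0, 0) (pi, 2*pi)) ?g"
    using borel_integrable_compact[OF compact_cbox cont]
    by (intro set_borel_integral_eq_integral) (simp add: set_integrable_def)
  also have "\<dots> = integral (cbox 0 pi) (\<lambda>t. 2 * pi * (sin t * h (cos t)))"
    unfolding integral_prod_continuous[OF cont] by (intro integral_cong) simp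
  also have "\<dots> = 2 * pi * integral {-1..1} h"
    unfolding cbox_interval by (intro integral_unique has_integral_mult_right has_integral_sin_mult_cos assms(1))
  finally show ?thesis .
qed

lemma one_plus_mult_sq_pos:
  fixes k x :: real
  assumes "k > -1" and "\<bar>x\<bar> \<le> 1"
  shows "1 + k * x^2 > 0"
proof (cases "k \<ge> 0")
  case False
  have "x^2 \<le> 1"
    using assms(2) by (simp add: abs_square_le_1)
  then have "k * x^2 \<ge> k"
    using False by (simp add: mult_le_cancel_left1)
  then show ?thesis
    using assms(1) by linarith
qed (simp add: add_pos_nonneg)

lemma abs_sqrt_minus_mult_less_1:
  fixes k x :: real
  assumes "-1 < k" and "k \<le> 0" and "\<bar>x\<bar> \<le> 1"
  shows "\<bar>sqrt (-k) * x\<bar> < 1"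
proof -
  have "\<bar>sqrt (-k) * x\<bar> \<le> sqrt (-k)"
    using assms by (simp add: abs_mult mult_left_le)
  also have "\<dots> < 1"
    using assms(1) by simp
  finally show ?thesis .
qed

definition arctan_quad :: "real \<Rightarrow> real \<Rightarrow> real" where
  "arctan_quad k x =
     (if k > 0 then arctan (sqrt k * x) / sqrt k
      else if k = 0 then x
      else artanh (sqrt (-k) * x) / sqrt (-k))"

lemma arctan_quad_has_real_derivative:
  assumes "k > -1" and "\<bar>x\<bar> \<le> 1"
  shows "(arctan_quad k has_real_derivative 1 / (1 + k * x^2)) (at x within S)"
proof -
  consider "k > 0" | "k = 0" | "k < 0"
    by linarith
  then show ?thesis
  proof cases
    case 1
    define r where "r = sqrt k"
    have "r > 0" and "(r * x)^2 = k * x^2"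
      using 1 by (simp_all add: r_def power_mult_distrib)
    then have "((\<lambda>x. arctan (r * x) / r) has_real_derivative 1 / (1 + k * x^2)) (at x within S)"
      by (auto intro!: derivative_eq_intros simp: inverse_eq_divide)
    moreover have "arctan_quad k = (\<lambda>x. arctan (r * x) / r)"
      using 1 by (simp add: fun_eq_iff arctan_quad_def r_def)
    ultimately show ?thesis
      by simp
  next
    case 2
    then have "arctan_quad k = (\<lambda>x. x)"
      by (simp add: fun_eq_iff arctan_quad_def)
    then show ?thesis
      using 2 by simp
  next
    case 3
    define r where "r = sqrt (-k)"
    have "r > 0" and "(r * x)^2 = - (k * x^2)"
      using 3 by (simp_all add: r_def power_mult_distrib)
    moreover have "\<bar>r * x\<bar> < 1"
      using abs_sqrt_minus_mult_less_1 assms 3 by (simp add: r_def)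
    ultimately have "((\<lambda>x. artanh (r * x)) has_real_derivative 1 / (1 - (r * x)^2) * r) (at x within S)"
      by (intro DERIV_chain2[where f=artanh] artanh_real_has_field_derivative)
         (auto intro!: derivative_eq_intros)
    then have "((\<lambda>x. artanh (r * x) / r) has_real_derivative 1 / (1 + k * x^2)) (at x within S)"
      using \<open>r > 0\<close> \<open>(r * x)^2 = - (k * x^2)\<close> by (auto dest: DERIV_cdivide[where c=r])
    moreover have "arctan_quad k = (\<lambda>x. artanh (r * x) / r)"
      using 3 by (simp add: fun_eq_iff arctan_quad_def r_def)
    ultimately show ?thesis
      by simp
  qed
qed

lemma arctan_quad_minus:
  assumes "k > -1" and "\<bar>x\<bar> \<le> 1"
  shows "arctan_quad k (-x) = - arctan_quad k x"
proof -
  have "k < 0 \<Longrightarrow> \<bar>sqrt (-k) * x\<bar> < 1"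
    using abs_sqrt_minus_mult_less_1 assms by simp
  then show ?thesis
    by (simp add: arctan_quad_def arctan_minus)
qed

lemma has_integral_inverse_sq_quadratic:
  assumes "k > -1"
  shows "((\<lambda>x. 1 / (1 + k * x^2)^2) has_integral 1 / (1 + k) + arctan_quad k 1) {-1..1}"
proof -
  define H where "H x = x / (2 * (1 + k * x^2)) + arctan_quad k x / 2" for x
  have "(H has_real_derivative 1 / (1 + k * x^2)^2) (at x within {-1..1})"
    if "x \<in> {-1..1}" for x
  proof -
    have x: "\<bar>x\<bar> \<le> 1"
      using that by auto
    have pos: "1 + k * x^2 > 0"
      using one_plus_mult_sq_pos[OF assms x] .
    have "((\<lambda>x. x / (2 * (1 + k * x^2))) has_real_derivative
            (1 - k * x^2) / (2 * (1 + k * x^2)^2)) (at x within {-1..1})"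
      using pos by (auto intro!: derivative_eq_intros simp: divide_simps)
                   (simp add: algebra_simps power2_eq_square)
    moreover have "((\<lambda>x. arctan_quad k x / 2) has_real_derivative
                     1 / (1 + k * x^2) / 2) (at x within {-1..1})"
      by (intro DERIV_cdivide arctan_quad_has_real_derivative[OF assms x])
    ultimately have "(H has_real_derivative
                       (1 - k * x^2) / (2 * (1 + k * x^2)^2) + 1 / (1 + k * x^2) / 2)
                       (at x within {-1..1})"
      unfolding H_def[abs_def] by (rule DERIV_add)
    moreover have "(2 - q) / (2 * q^2) + 1 / q / 2 = 1 / q^2" if "q \<noteq> 0" for q :: real
      using that by (simp add: field_simps power2_eq_square)
    from this[of "1 + k * x^2"]
    have "(1 - k * x^2) / (2 * (1 + k * x^2)^2) + 1 / (1 + k * x^2) / 2 = 1 / (1 + k * x^2)^2"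
      using pos by simp
    ultimately show ?thesis
      by simp
  qed
  then have "((\<lambda>x. 1 / (1 + k * x^2)^2) has_integral H 1 - H (-1)) {-1..1}"
    by (intro fundamental_theorem_of_calculus) (auto simp: has_real_derivative_iff_has_vector_derivative)
  moreover have "H 1 - H (-1) = 1 / (1 + k) + arctan_quad k 1"
    using arctan_quad_minus[OF assms, of 1] by (simp add: H_def) (simp add: divide_simps)
  ultimately show ?thesis
    by simp
qed

lemma N_T_diag3_axisymmetric:
  assumes "\<bar>t1\<bar> = s" and "\<bar>t2\<bar> = s" and "s > 0" and "t3 \<noteq> 0"
  shows "N_T (diag3 t1 t2 t3) =
           inverse (2 * pi * s^4 * (t3^2 / s^2 + arctan_quad (s^2 / t3^2 - 1) 1))"
proof -
  define M where "M = matrix_inv (diag3 t1 t2 t3 ** diag3 t1 t2 t3)"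
  define k where "k = s^2 / t3^2 - 1"
  define h where "h = (\<lambda>x. s^4 / (1 + k * x^2)^2)"
  have k: "k > -1" and k_inv: "1 / (1 + k) = t3^2 / s^2"
    using assms by (simp_all add: k_def)
  have "t1 * t1 = s^2" and "t2 * t2 = s^2"
    using assms(1,2) abs_mult_self_eq[of t1] abs_mult_self_eq[of t2]
    by (simp_all add: power2_eq_square)
  then have "M = diag3 (inverse (s^2)) (inverse (s^2)) (inverse (t3^2))"
    using assms by (simp add: M_def diag3_mult matrix_inv_diag3 power2_eq_square)
  then have "sphere_pt \<theta> \<phi> \<bullet> (M *v sphere_pt \<theta> \<phi>) = (1 + k * (cos \<theta>)^2) / s^2" for \<theta> \<phi>
    using assms by (simp add: sphere_pt_inner_diag3_axisymmetric k_def field_simps)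
  then have "inverse ((sphere_pt \<theta> \<phi> \<bullet> (M *v sphere_pt \<theta> \<phi>))^2) = h (cos \<theta>)" for \<theta> \<phi>
    by (simp add: h_def field_simps)
  moreover have "continuous_on {-1..1} h"
    unfolding h_def using one_plus_mult_sq_pos[OF k]
    by (intro continuous_intros) (force simp: abs_le_iff)
  ultimately have "sphere_integral (\<lambda>n. inverse ((n \<bullet> (M *v n))^2)) = 2 * pi * integral {-1..1} h"
    by (intro sphere_integral_zonal)
  also have "\<dots> = 2 * pi * s^4 * (t3^2 / s^2 + arctan_quad k 1)"
    using has_integral_mult_right[OF has_integral_inverse_sq_quadratic[OF k], of "s^4"]
    by (simp add: h_def integral_unique k_inv)
  finally show ?thesis
    by (simp add: N_T_def M_def k_def)
qed

lemma sq_div_add_arctan_quad_closed_form: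
  fixes u :: real
  assumes "u > 0"
  shows "u^2 / (u^2 + arctan_quad (inverse (u^2) - 1) 1) =
           (if u < 1 then
              inverse (1 + arctan (sqrt (inverse (u^2) - 1)) / (u^2 * sqrt (inverse (u^2) - 1)))
            else if u = 1 then 1/2
            else inverse (1 - sqrt (1 - inverse (u^2)) / (2 * (u^2 - 1))
                    * ln (\<bar>1 - sqrt (1 - inverse (u^2))\<bar> / (1 + sqrt (1 - inverse (u^2))))))"
proof -
  define k where "k = inverse (u^2) - 1"
  have ratio: "u^2 / (u^2 + a) = inverse (1 + a / u^2)" for a
    using assms by (simp add: field_simps)
  consider "u < 1" | "u = 1" | "u > 1"
    by linarith
  then show ?thesis
  proof cases
    case 1
    then have "k > 0"
      using assms by (simp add: k_def power_less_one_iff one_less_inverse_iff)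
    then show ?thesis
      using 1 by (simp add: ratio arctan_quad_def flip: k_def)
  next
    case 2
    then show ?thesis
      by (simp add: arctan_quad_def)
  next
    case 3
    define m where "m = sqrt (1 - inverse (u^2))"
    have "u^2 > 1"
      using 3 by (simp add: one_less_power)
    then have "inverse (u^2) < 1"
      by (simp add: inverse_less_1_iff)
    then have "k < 0" and m: "0 < m" "m < 1" and "m^2 = 1 - inverse (u^2)"
      using \<open>u^2 > 1\<close> assms by (simp_all add: k_def m_def)
    then have um: "u^2 - 1 = u^2 * m^2"
      using assms by (simp add: field_simps)
    have ln_m: "ln (\<bar>1 - m\<bar> / (1 + m)) = - ln ((1 + m) / (1 - m))"
      using m by (simp add: ln_div)
    have arctan_m: "arctan_quad k 1 = ln ((1 + m) / (1 - m)) / (2 * m)"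
      using \<open>k < 0\<close> \<open>u^2 > 1\<close> by (simp add: arctan_quad_def artanh_def m_def k_def)
    have "m / (2 * (u^2 - 1)) * ln (\<bar>1 - m\<bar> / (1 + m)) = - (arctan_quad k 1 / u^2)"
      unfolding um ln_m arctan_m using m assms by (simp add: field_simps power2_eq_square)
    then show ?thesis
      using 3 by (simp add: ratio flip: k_def m_def)
  qed
qed

theorem mainTheorem4:
  fixes t1 t2 t3 s :: real
  assumes "\<bar>t1\<bar> = s" and "\<bar>t2\<bar> = s" and "s > 0" and "\<bar>t3\<bar> > 0"
  shows "(let T = diag3 t1 t2 t3; s3 = \<bar>t3\<bar>; u = s3 / s in
          2 * pi * N_T T * \<bar>det T\<bar> = 1 \<longleftrightarrow>
          s3 = (if u < 1 then
                  inverse (1 + arctan (sqrt (inverse (u^2) - 1)) / (u^2 * sqrt (inverse (u^2) - 1)))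
                else if u = 1 then 1/2
                else inverse (1 - sqrt (1 - inverse (u^2)) / (2 * (u^2 - 1))
                        * ln (\<bar>1 - sqrt (1 - inverse (u^2))\<bar> / (1 + sqrt (1 - inverse (u^2)))))))"
proof -
  define s3 u where "s3 = \<bar>t3\<bar>" and "u = s3 / s"
  define J where "J = u^2 + arctan_quad (inverse (u^2) - 1) 1"
  have u: "u > 0" and "t3^2 / s^2 = u^2" and "s^2 / t3^2 - 1 = inverse (u^2) - 1"
    using assms by (simp_all add: u_def s3_def power_divide)
  then have "N_T (diag3 t1 t2 t3) = inverse (2 * pi * s^4 * J)"
    using N_T_diag3_axisymmetric[OF assms(1-3)] assms(4) by (simp add: J_def)
  moreover have "\<bar>det (diag3 t1 t2 t3)\<bar> = s^2 * s3"
    using assms by (simp add: det_diag3 abs_mult s3_def power2_eq_square)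
  ultimately have "2 * pi * N_T (diag3 t1 t2 t3) * \<bar>det (diag3 t1 t2 t3)\<bar> = s3 / (s^2 * J)"
    using assms(3) by (simp add: field_simps power2_eq_square power4_eq_xxxx)
  moreover have "u^2 / J = s3 * (s3 / (s^2 * J))"
    by (simp add: u_def power2_eq_square)
  then have "s3 / (s^2 * J) = 1 \<longleftrightarrow> s3 = u^2 / J"
    using mult_cancel_left1[of s3 "s3 / (s^2 * J)"] assms(4) by (auto simp only: s3_def)
  ultimately show ?thesis
    using sq_div_add_arctan_quad_closed_form[OF u]
    by (simp add: Let_def J_def flip: s3_def u_def)
qed

end
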